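(* Let $\mathbb{F}$ be a finite field, $K=\mathbb{F}(\!(\pi)\!)$ and $\mathcal{O}=\mathbb{F}[\![\pi]\!]$. The action of $\mathrm{AGL}_1(\mathcal{O})$ on $\mathcal{T}_\mathcal{O}$ is coarsely diagonal.
   Context: $\mathrm{AGL}_1(\mathcal{O})=\mathcal{O}^\times\ltimes\mathcal{O}$ consists of pairs $(\alpha,\beta)$ acting on $K$ by $\gamma\mapsto\alpha\gamma+\beta$. With $\mathfrak{m}=\pi\mathcal{O}$, the tree $\mathcal{T}_\mathcal{O}$ has vertices $\gamma\bmod\mathfrak{m}^e$ ($\gamma\in\mathcal{O}$, $e\ge0$), with $\gamma\bmod\mathfrak{m}^e$ adjacent to $\delta\bmod\mathfrak{m}^f$ iff $|e-f|=1$ and $\gamma\equiv\delta\bmod\mathfrak{m}^{\min\{e,f\}}$; $\mathrm{AGL}_1(\mathcal{O})$ acts (faithfully) by $(\alpha,\beta).(\gamma\bmod\mathfrak{m}^e)=\alpha\gamma+\beta\bmod\mathfrak{m}^e$. Ordering $\mathbb{F}$ identifies $\mathcal{T}_\mathcal{O}$ with the rooted $|\mathbb{F}|$-ary tree. For a tree automorphism $f$ with wreath recursion $f=\rho(f)(f_1,\dots,f_m)$ (where $f(iw)=\rho(f)(i)f_i(w)$), its states form the smallest set containing $f$ and closed under $f\mapsto f_i$. A group $H$ of tree automorphisms is coarsely diagonal if for every $h\in H$ and every state $h'$ of $h$, $(h')^{-1}h$ has finite order; an action is coarsely diagonal if it is faithful and its image is. *)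

theory Defs
  imports "HOL-Computational_Algebra.Formal_Power_Series"
begin

(* The rooted |F|-ary tree: vertices are finite words over the alphabet 'a (= F).
   The vertex gamma mod m^e corresponds to the word [gamma_0, ..., gamma_(e-1)]
   of the first e coefficients of gamma. *)

definition tree_aut :: "('a list \<Rightarrow> 'a list) \<Rightarrow> bool" where
  "tree_aut f \<longleftrightarrow> bij f \<and> (\<forall>w. length (f w) = length w)
      \<and> (\<forall>v w. take (length v) (f (v @ w)) = f v)"

(* states: smallest set containing f and closed under f |-> f_i,
   where f (i # w) = rho(f)(i) # f_i w *)
inductive_set states :: "('a list \<Rightarrow> 'a list) \<Rightarrow> ('a list \<Rightarrow> 'a list) set"
  for f where
  self: "f \<in> states f"
| sect: "g \<in> states f \<Longrightarrow> (\<lambda>w. tl (g (i # w))) \<in> states f"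

definition finite_order :: "('a \<Rightarrow> 'a) \<Rightarrow> bool" where
  "finite_order g \<longleftrightarrow> (\<exists>n>0. g ^^ n = id)"

definition coarsely_diagonal :: "('a list \<Rightarrow> 'a list) set \<Rightarrow> bool" where
  "coarsely_diagonal H \<longleftrightarrow> (\<forall>h\<in>H. tree_aut h)
      \<and> (\<forall>h\<in>H. \<forall>h'\<in>states h. finite_order (inv h' \<circ> h))"

definition coarsely_diagonal_action ::
  "'g set \<Rightarrow> ('g \<Rightarrow> 'a list \<Rightarrow> 'a list) \<Rightarrow> bool" where
  "coarsely_diagonal_action G act \<longleftrightarrow> inj_on act G \<and> coarsely_diagonal (act ` G)"

definition AGL1 :: "('a::comm_ring_1 fps \<times> 'a fps) set" where
  "AGL1 = {(\<alpha>, \<beta>). \<alpha> dvd 1}"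

definition fps_of_word :: "'a::zero list \<Rightarrow> 'a fps" where
  "fps_of_word w = Abs_fps (\<lambda>n. if n < length w then w ! n else 0)"

(* (alpha,beta).(gamma mod m^e) = alpha*gamma + beta mod m^e *)
definition agl_act :: "('a::comm_ring_1 fps \<times> 'a fps) \<Rightarrow> 'a list \<Rightarrow> 'a list" where
  "agl_act g w = map (\<lambda>n. fps_nth (fst g * fps_of_word w + snd g) n) [0..<length w]"

end

theory Submission
  imports Defs
begin

(* A state of gamma |-> alpha gamma + beta is again of the form gamma |-> alpha gamma + beta'
   (the section at digit i has translation part (alpha i + beta - digit) / pi), so for a
   state h' of h the map h'^-1 h is a translation gamma |-> gamma + delta.  In characteristic
   p > 0 every translation has order dividing p. *)

lemma fps_nth_fps_of_word: "n < length w \<Longrightarrow> fps_nth (fps_of_word w) n = w ! n"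
  by (simp add: fps_of_word_def)

lemma fps_nth_fps_of_word_append:
  "n < length v \<Longrightarrow> fps_nth (fps_of_word (v @ w)) n = fps_nth (fps_of_word v) n"
  by (simp add: fps_of_word_def nth_append)

lemma fps_of_word_Cons:
  "fps_of_word (i # w) = fps_const (i :: 'a :: comm_ring_1) + fps_X * fps_of_word w"
  by (rule fps_ext) (auto simp: fps_of_word_def split: nat.split)

lemma fps_of_word_replicate_zero: "fps_of_word (replicate k 0) = 0"
  by (rule fps_ext) (simp add: fps_of_word_def)

lemma fps_of_word_one_replicate_zero:
  "fps_of_word (1 # replicate k 0) = (1 :: 'a :: comm_ring_1 fps)"
  by (rule fps_ext) (auto simp: fps_of_word_def nth_Cons split: nat.splits)

lemma length_agl_act [simp]: "length (agl_act g w) = length w"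
  by (simp add: agl_act_def)

lemma nth_agl_act: "n < length w \<Longrightarrow> agl_act (a, b) w ! n = fps_nth (a * fps_of_word w + b) n"
  by (simp add: agl_act_def)

lemma fps_nth_mult_add_cong:
  fixes X Y a b :: "'a :: comm_ring_1 fps"
  assumes "\<And>m. m < k \<Longrightarrow> fps_nth X m = fps_nth Y m" and "n < k"
  shows "fps_nth (a * X + b) n = fps_nth (a * Y + b) n"
proof -
  have "(\<Sum>i=0..n. fps_nth a i * fps_nth X (n - i)) = (\<Sum>i=0..n. fps_nth a i * fps_nth Y (n - i))"
    using assms by (intro sum.cong) auto
  then show ?thesis by (simp add: fps_mult_nth)
qed

lemma agl_act_agl_act:
  fixes a b a' b' :: "'a :: comm_ring_1 fps"
  shows "agl_act (a, b) (agl_act (a', b') w) = agl_act (a * a', a * b' + b) w"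
proof (rule nth_equalityI)
  fix n assume n: "n < length (agl_act (a, b) (agl_act (a', b') w))"
  have "fps_nth (a * fps_of_word (agl_act (a', b') w) + b) n
        = fps_nth (a * (a' * fps_of_word w + b') + b) n"
    using n by (intro fps_nth_mult_add_cong[where k = "length w"])
      (simp_all add: fps_nth_fps_of_word nth_agl_act)
  also have "a * (a' * fps_of_word w + b') + b = a * a' * fps_of_word w + (a * b' + b)"
    by (simp add: algebra_simps)
  finally show "agl_act (a, b) (agl_act (a', b') w) ! n = agl_act (a * a', a * b' + b) w ! n"
    using n by (simp add: nth_agl_act)
qed simp

lemma agl_act_one_zero: "agl_act (1, 0) = id"
  by (intro ext nth_equalityI) (simp_all add: nth_agl_act fps_nth_fps_of_word)

lemma agl_act_comp_inverse:
  fixes a b :: "'a :: comm_ring_1 fps"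
  assumes "a * a' = 1"
  shows "agl_act (a, b) \<circ> agl_act (a', - (a' * b)) = id"
    and "agl_act (a', - (a' * b)) \<circ> agl_act (a, b) = id"
proof -
  have "a * - (a' * b) + b = 0" "a' * a = 1"
    using assms by (simp_all add: mult.assoc[symmetric] mult.commute)
  then show "agl_act (a, b) \<circ> agl_act (a', - (a' * b)) = id"
    and "agl_act (a', - (a' * b)) \<circ> agl_act (a, b) = id"
    using assms by (simp_all add: fun_eq_iff agl_act_agl_act agl_act_one_zero)
qed

lemma inv_agl_act:
  fixes a b :: "'a :: comm_ring_1 fps"
  assumes "a * a' = 1"
  shows "inv (agl_act (a, b)) = agl_act (a', - (a' * b))"
  using agl_act_comp_inverse[OF assms] by (metis inv_unique_comp)

lemma take_agl_act_append:
  "take (length v) (agl_act (a, b) (v @ w)) = agl_act (a, b) v"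
proof (rule nth_equalityI)
  fix n assume "n < length (take (length v) (agl_act (a, b) (v @ w)))"
  then have "n < length v" by simp
  then have "fps_nth (a * fps_of_word (v @ w) + b) n = fps_nth (a * fps_of_word v + b) n"
    by (intro fps_nth_mult_add_cong[where k = "length v"]) (simp_all add: fps_nth_fps_of_word_append)
  with \<open>n < length v\<close>
  show "take (length v) (agl_act (a, b) (v @ w)) ! n = agl_act (a, b) v ! n"
    by (simp add: nth_agl_act)
qed simp

lemma tree_aut_agl_act:
  fixes a b :: "'a :: comm_ring_1 fps"
  assumes "a dvd 1"
  shows "tree_aut (agl_act (a, b))"
proof -
  from assms obtain a' where "a * a' = 1" by (metis dvdE)
  from agl_act_comp_inverse[OF this] have "bij (agl_act (a, b))"
    by (metis o_bij)
  then show ?thesis by (simp add: tree_aut_def take_agl_act_append)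
qed

lemma section_agl_act:
  fixes a b :: "'a :: comm_ring_1 fps"
  shows "(\<lambda>w. tl (agl_act (a, b) (i # w))) = agl_act (a, fps_shift 1 (a * fps_const i + b))"
proof
  fix w
  have "a * fps_of_word (i # w) + b = (a * fps_const i + b) + fps_X * (a * fps_of_word w)"
    by (simp add: fps_of_word_Cons algebra_simps)
  then show "tl (agl_act (a, b) (i # w)) = agl_act (a, fps_shift 1 (a * fps_const i + b)) w"
    by (simp add: agl_act_def map_upt_Suc del: upt_Suc)
qed

lemma states_agl_act:
  fixes a b :: "'a :: comm_ring_1 fps"
  assumes "g \<in> states (agl_act (a, b))"
  shows "\<exists>b'. g = agl_act (a, b')"
  using assms
proof induction
  case self
  then show ?case by blast
next
  case (sect g i)
  then show ?case by (auto simp: section_agl_act)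
qed

lemma funpow_agl_act_translation:
  fixes d :: "'a :: comm_ring_1 fps"
  shows "agl_act (1, d) ^^ n = agl_act (1, of_nat n * d)"
proof (induction n)
  case 0
  then show ?case by (simp add: agl_act_one_zero)
next
  case (Suc n)
  then show ?case by (simp add: fun_eq_iff agl_act_agl_act algebra_simps)
qed

lemma finite_order_agl_act_translation:
  fixes d :: "'a :: {field, finite} fps"
  shows "finite_order (agl_act (1, d))"
proof -
  have "CHAR('a) > 0" by (rule finite_imp_CHAR_pos) simp
  then obtain n where n: "n > 0" "of_nat n = (0 :: 'a)" using CHAR_pos_iff by blast
  then have "(of_nat n :: 'a fps) = 0" by (simp flip: fps_of_nat)
  with n show ?thesis
    unfolding finite_order_def by (auto simp: funpow_agl_act_translation agl_act_one_zero)
qed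

lemma inj_agl_act: "inj (agl_act :: 'a :: comm_ring_1 fps \<times> 'a fps \<Rightarrow> _)"
proof (rule injI)
  fix g h :: "'a fps \<times> 'a fps"
  assume eq: "agl_act g = agl_act h"
  obtain a b a' b' where g: "g = (a, b)" and h: "h = (a', b')" by fastforce
  have b: "fps_nth b n = fps_nth b' n" for n
    using arg_cong[OF eq, of "\<lambda>f. f (replicate (Suc n) 0) ! n"]
    by (simp add: g h nth_agl_act fps_of_word_replicate_zero del: replicate_Suc)
  have "fps_nth (a + b) n = fps_nth (a' + b') n" for n
    using arg_cong[OF eq, of "\<lambda>f. f (1 # replicate n 0) ! n"]
    by (simp add: g h nth_agl_act fps_of_word_one_replicate_zero del: replicate_Suc)
  with b have "fps_nth a n = fps_nth a' n" for n by simp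
  with b show "g = h" by (simp add: g h fps_ext)
qed

theorem lemma6p7:
  shows "coarsely_diagonal_action (AGL1 :: ('a::{field,finite} fps \<times> 'a fps) set) agl_act"
proof -
  have "finite_order (inv h' \<circ> agl_act (a, b))"
    if "a dvd 1" and "h' \<in> states (agl_act (a, b))" for a b :: "'a fps" and h'
  proof -
    obtain a' where a': "a * a' = 1" using \<open>a dvd 1\<close> by (metis dvdE)
    obtain b' where "h' = agl_act (a, b')" using states_agl_act \<open>h' \<in> _\<close> by blast
    then have "inv h' \<circ> agl_act (a, b) = agl_act (a', - (a' * b')) \<circ> agl_act (a, b)"
      using a' by (simp add: inv_agl_act)
    also have "\<dots> = agl_act (1, a' * b - a' * b')"
      using a' by (simp add: fun_eq_iff agl_act_agl_act mult.commute)
    finally show ?thesis by (simp add: finite_order_agl_act_translation)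
  qed
  then show ?thesis
    unfolding coarsely_diagonal_action_def coarsely_diagonal_def AGL1_def
    using inj_agl_act by (auto intro: tree_aut_agl_act inj_on_subset)
qed

end
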